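(* Assume Stanley's conjecture: for all partitions $\lambda,\mu,\nu$ the polynomial $c_\lambda(\alpha)c_\mu(\alpha)c'_\nu(\alpha)f^\nu_{\lambda\mu}(\alpha)$ has non-negative integer coefficients. Fix a positive integer $m$ and set $a^\nu_{\lambda\mu}:=f^\nu_{\lambda\mu}(2/m)$. Then for fixed partitions $\lambda,\mu,\nu$ of length at most $r$, the following are equivalent: (i) $f^\nu_{\lambda\mu}(\alpha)$ is non-zero for all positive real $\alpha$; (ii) the Littlewood–Richardson coefficient $c^\nu_{\lambda\mu}$ is non-zero; (iii) $a^\nu_{\lambda\mu}$ is non-zero.
   Context: $P^{(\alpha)}_\lambda$ denote the Jack symmetric polynomials in $r$ variables in Macdonald's normalization (coefficient of the monomial symmetric function $m_\lambda$ equal to $1$); $P^{(\alpha)}_\lambda P^{(\alpha)}_\mu=\sum_\nu f^\nu_{\lambda\mu}(\alpha)P^{(\alpha)}_\nu$ with $f^\nu_{\lambda\mu}(\alpha)$ rational functions in $\alpha$, and $f^\nu_{\lambda\mu}(1)=c^\nu_{\lambda\mu}$ (since $P^{(1)}_\lambda$ is the Schur function). For a partition $\lambda$, with $a(s)$, $l(s)$ the arm and leg lengths of a box $s$, $c_\lambda(\alpha)=\prod_{s\in\lambda}(\alpha a(s)+l(s)+1)$ and $c'_\lambda(\alpha)=\prod_{s\in\lambda}(\alpha a(s)+l(s)+\alpha)$. (In the paper $a^\nu_{\lambda\mu}$ arises as the structure constants for multiplying spherical functions on a symmetric space with restricted root system of type $A_{r-1}$ and root multiplicity $m$, which equal $f^\nu_{\lambda\mu}(2/m)$.)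 *)

theory Defs
  imports Complex_Main "HOL-Library.Poly_Mapping" "HOL-Computational_Algebra.Polynomial"
begin

text \<open>A partition is a weakly decreasing function nat => nat that is eventually zero;
  la i is the (i+1)-st part.  It has length at most r iff la r = 0.\<close>

definition is_partition :: "(nat \<Rightarrow> nat) \<Rightarrow> bool" where
  "is_partition la \<longleftrightarrow> (\<forall>i. la (Suc i) \<le> la i) \<and> (\<exists>n. la n = 0)"

definition len_le :: "(nat \<Rightarrow> nat) \<Rightarrow> nat \<Rightarrow> bool" where
  "len_le la r \<longleftrightarrow> la r = 0"

definition psize :: "(nat \<Rightarrow> nat) \<Rightarrow> nat" where
  "psize la = (\<Sum>i<(LEAST n. la n = 0). la i)"

text \<open>Young diagram (boxes (i,j), row i, column j, 0-indexed), conjugate, arm and leg.\<close>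

definition diagram :: "(nat \<Rightarrow> nat) \<Rightarrow> (nat \<times> nat) set" where
  "diagram la = {(i, j). j < la i}"

definition conj_part :: "(nat \<Rightarrow> nat) \<Rightarrow> nat \<Rightarrow> nat" where
  "conj_part la j = card {i. j < la i}"

definition arm :: "(nat \<Rightarrow> nat) \<Rightarrow> nat \<times> nat \<Rightarrow> nat" where
  "arm la s = la (fst s) - snd s - 1"

definition leg :: "(nat \<Rightarrow> nat) \<Rightarrow> nat \<times> nat \<Rightarrow> nat" where
  "leg la s = conj_part la (snd s) - fst s - 1"

definition hook_c :: "(nat \<Rightarrow> nat) \<Rightarrow> real \<Rightarrow> real" where
  "hook_c la \<alpha> = (\<Prod>s\<in>diagram la. \<alpha> * arm la s + leg la s + 1)"

definition hook_c' :: "(nat \<Rightarrow> nat) \<Rightarrow> real \<Rightarrow> real" where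
  "hook_c' la \<alpha> = (\<Prod>s\<in>diagram la. \<alpha> * arm la s + leg la s + \<alpha>)"

text \<open>Polynomials in variables x_0,...,x_(r-1) with real coefficients:
  (nat =>0 nat) =>0 real (exponent vectors to coefficients).\<close>

type_synonym rpoly = "(nat \<Rightarrow>\<^sub>0 nat) \<Rightarrow>\<^sub>0 real"

definition horiz_strip :: "(nat \<Rightarrow> nat) \<Rightarrow> (nat \<Rightarrow> nat) \<Rightarrow> bool" where
  "horiz_strip mu la \<longleftrightarrow> (\<forall>i. la (Suc i) \<le> mu i \<and> mu i \<le> la i)"

definition b_jack :: "(nat \<Rightarrow> nat) \<Rightarrow> real \<Rightarrow> nat \<times> nat \<Rightarrow> real" where
  "b_jack la \<alpha> s = (\<alpha> * arm la s + leg la s + 1) / (\<alpha> * arm la s + leg la s + \<alpha>)"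

text \<open>psi_{la/mu}(alpha) for a horizontal strip la/mu (Macdonald VI (6.24), Jack limit):
  product over boxes s in R - C of b_mu(s)/b_la(s), where R (resp. C) is the union of
  the rows (resp. columns) of la meeting la/mu.\<close>

definition psi_jack :: "(nat \<Rightarrow> nat) \<Rightarrow> (nat \<Rightarrow> nat) \<Rightarrow> real \<Rightarrow> real" where
  "psi_jack mu la \<alpha> =
     (\<Prod>s\<in>{(i, j). j < la i \<and> mu i < la i} - {(i, j). j < la i \<and> (\<exists>k. mu k \<le> j \<and> j < la k)}.
        b_jack mu \<alpha> s / b_jack la \<alpha> s)"

text \<open>Semistandard tableaux of shape la with entries in {1..r}, as chains of partitions
  0 = ch 0, ch 1, ..., ch r = la with horizontal-strip steps.\<close>

definition tableaux :: "nat \<Rightarrow> (nat \<Rightarrow> nat) \<Rightarrow> (nat \<Rightarrow> nat \<Rightarrow> nat) set" where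
  "tableaux r la = {ch. ch 0 = (\<lambda>_. 0) \<and> (\<forall>k\<ge>r. ch k = la) \<and>
       (\<forall>k<r. horiz_strip (ch k) (ch (Suc k)))}"

definition tab_exp :: "nat \<Rightarrow> (nat \<Rightarrow> nat \<Rightarrow> nat) \<Rightarrow> (nat \<Rightarrow>\<^sub>0 nat)" where
  "tab_exp r ch = (\<Sum>k<r. Poly_Mapping.single k (psize (ch (Suc k)) - psize (ch k)))"

definition jackP :: "nat \<Rightarrow> real \<Rightarrow> (nat \<Rightarrow> nat) \<Rightarrow> rpoly" where
  "jackP r \<alpha> la = (\<Sum>ch\<in>tableaux r la.
      Poly_Mapping.single (tab_exp r ch) (\<Prod>k<r. psi_jack (ch k) (ch (Suc k)) \<alpha>))"

definition schurP :: "nat \<Rightarrow> (nat \<Rightarrow> nat) \<Rightarrow> rpoly" where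
  "schurP r la = (\<Sum>ch\<in>tableaux r la. Poly_Mapping.single (tab_exp r ch) 1)"

definition smult_rp :: "real \<Rightarrow> rpoly \<Rightarrow> rpoly" where
  "smult_rp c p = Poly_Mapping.map (\<lambda>x. c * x) p"

definition struct_const ::
  "nat \<Rightarrow> ((nat \<Rightarrow> nat) \<Rightarrow> rpoly) \<Rightarrow> (nat \<Rightarrow> nat) \<Rightarrow> (nat \<Rightarrow> nat) \<Rightarrow> (nat \<Rightarrow> nat) \<Rightarrow> real" where
  "struct_const r B la mu =
     (let S = {nu. is_partition nu \<and> len_le nu r \<and> psize nu = psize la + psize mu} in
      THE g. (\<forall>nu. nu \<notin> S \<longrightarrow> g nu = 0) \<and>
             B la * B mu = (\<Sum>nu\<in>S. smult_rp (g nu) (B nu)))"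

definition jack_f :: "nat \<Rightarrow> real \<Rightarrow> (nat \<Rightarrow> nat) \<Rightarrow> (nat \<Rightarrow> nat) \<Rightarrow> (nat \<Rightarrow> nat) \<Rightarrow> real" where
  "jack_f r \<alpha> la mu nu = struct_const r (jackP r \<alpha>) la mu nu"

definition lr_coeff :: "nat \<Rightarrow> (nat \<Rightarrow> nat) \<Rightarrow> (nat \<Rightarrow> nat) \<Rightarrow> (nat \<Rightarrow> nat) \<Rightarrow> real" where
  "lr_coeff r la mu nu = struct_const r (schurP r) la mu nu"

definition stanley_conjecture :: bool where
  "stanley_conjecture \<longleftrightarrow>
     (\<forall>r la mu nu. is_partition la \<and> is_partition mu \<and> is_partition nu \<and>
        len_le la r \<and> len_le mu r \<and> len_le nu r \<longrightarrow>
        (\<exists>p :: int poly. (\<forall>i. 0 \<le> coeff p i) \<and>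
           (\<forall>\<alpha>>0. hook_c la \<alpha> * hook_c mu \<alpha> * hook_c' nu \<alpha> * jack_f r \<alpha> la mu nu
                    = poly (map_poly real_of_int p) \<alpha>)))"

end

theory Submission
  imports Defs
begin

text \<open>At \<open>\<alpha> = 1\<close> the Jack polynomials are the Schur polynomials, so \<open>f\<^sup>\<nu>\<^sub>\<lambda>\<^sub>\<mu>(1)\<close> is the
  Littlewood-Richardson coefficient. Under Stanley's conjecture, \<open>f\<^sup>\<nu>\<^sub>\<lambda>\<^sub>\<mu>(\<alpha>)\<close> times the
  positive factor \<open>c\<^sub>\<lambda>(\<alpha>) c\<^sub>\<mu>(\<alpha>) c'\<^sub>\<nu>(\<alpha>)\<close> is a polynomial with non-negative coefficients,
  and such a polynomial vanishes at one positive point only if it is zero. Hence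
  \<open>f\<^sup>\<nu>\<^sub>\<lambda>\<^sub>\<mu>\<close> vanishes either at every positive \<open>\<alpha>\<close> or at none, in particular at \<open>1\<close> and
  at \<open>2/m\<close> simultaneously.\<close>

lemma b_jack_one: "b_jack la 1 s = 1"
  unfolding b_jack_def by (simp add: add_pos_nonneg)

lemma psi_jack_one: "psi_jack mu la 1 = 1"
  unfolding psi_jack_def by (simp add: b_jack_one)

lemma jackP_one: "jackP r 1 la = schurP r la"
  unfolding jackP_def schurP_def by (simp add: psi_jack_one)

lemma jack_f_one: "jack_f r 1 la mu nu = lr_coeff r la mu nu"
  unfolding jack_f_def lr_coeff_def by (simp add: jackP_one[abs_def])

lemma hook_c_pos: "\<alpha> > 0 \<Longrightarrow> hook_c la \<alpha> > 0"
  unfolding hook_c_def by (intro prod_pos) (simp add: add_nonneg_pos)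

lemma hook_c'_pos: "\<alpha> > 0 \<Longrightarrow> hook_c' la \<alpha> > 0"
  unfolding hook_c'_def by (intro prod_pos) (simp add: add_nonneg_pos)

lemma poly_nonneg_coeffs_eq_0_iff:
  fixes q :: "'a::linordered_idom poly"
  assumes "x > 0" and "\<And>i. 0 \<le> coeff q i"
  shows "poly q x = 0 \<longleftrightarrow> q = 0"
proof -
  have "0 \<le> poly q x \<and> (poly q x = 0 \<longrightarrow> q = 0)"
    using assms(2)
  proof (induction q rule: pCons_induct)
    case 0
    then show ?case by simp
  next
    case (pCons a p)
    have a_nonneg: "0 \<le> a"
      using pCons.prems[of 0] by simp
    have "0 \<le> poly p x" and p_eq_0: "poly p x = 0 \<longrightarrow> p = 0"
      using pCons.IH pCons.prems[of "Suc _"] by auto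
    then have "0 \<le> x * poly p x"
      using \<open>x > 0\<close> by simp
    moreover have "a = 0 \<and> p = 0" if "a + x * poly p x = 0"
    proof -
      have "a = 0" and "x * poly p x = 0"
        using that a_nonneg \<open>0 \<le> x * poly p x\<close> by linarith+
      then show ?thesis
        using p_eq_0 \<open>x > 0\<close> by simp
    qed
    ultimately show ?case
      using a_nonneg by auto
  qed
  then show ?thesis by auto
qed

lemma jack_f_eq_0_iff_at_any_pos:
  assumes stanley_conjecture
    and "is_partition la" "len_le la r"
    and "is_partition mu" "len_le mu r"
    and "is_partition nu" "len_le nu r"
    and "\<alpha> > 0" "\<beta> > 0"
  shows "jack_f r \<alpha> la mu nu = 0 \<longleftrightarrow> jack_f r \<beta> la mu nu = 0"
proof -
  obtain p :: "int poly" where coeffs: "\<And>i. 0 \<le> coeff p i"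
    and p_eq: "\<And>\<gamma>. \<gamma> > 0 \<Longrightarrow>
      hook_c la \<gamma> * hook_c mu \<gamma> * hook_c' nu \<gamma> * jack_f r \<gamma> la mu nu
        = poly (map_poly real_of_int p) \<gamma>"
    using assms(1-7) unfolding stanley_conjecture_def by blast
  define q where "q = map_poly real_of_int p"
  have "jack_f r \<gamma> la mu nu = 0 \<longleftrightarrow> q = 0" if "\<gamma> > 0" for \<gamma>
  proof -
    have "hook_c la \<gamma> * hook_c mu \<gamma> * hook_c' nu \<gamma> \<noteq> 0"
      using hook_c_pos hook_c'_pos that by (metis mult_pos_pos less_irrefl)
    then have "jack_f r \<gamma> la mu nu = 0 \<longleftrightarrow> poly q \<gamma> = 0"
      using p_eq[OF that] unfolding q_def by (metis mult_eq_0_iff)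
    also have "\<dots> \<longleftrightarrow> q = 0"
      using that coeffs by (intro poly_nonneg_coeffs_eq_0_iff) (simp_all add: q_def coeff_map_poly)
    finally show ?thesis .
  qed
  then show ?thesis
    using assms(8,9) by blast
qed

theorem corollary5p7:
  fixes r m :: nat and la mu nu :: "nat \<Rightarrow> nat"
  assumes stanley: stanley_conjecture
    and m_pos: "0 < m"
    and la: "is_partition la" "len_le la r"
    and mu: "is_partition mu" "len_le mu r"
    and nu: "is_partition nu" "len_le nu r"
  shows "((\<forall>\<alpha>::real>0. jack_f r \<alpha> la mu nu \<noteq> 0) \<longleftrightarrow> lr_coeff r la mu nu \<noteq> 0)
       \<and> (lr_coeff r la mu nu \<noteq> 0 \<longleftrightarrow> jack_f r (2 / real m) la mu nu \<noteq> 0)"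
proof -
  have vanishing_iff_at_one: "jack_f r \<alpha> la mu nu = 0 \<longleftrightarrow> lr_coeff r la mu nu = 0"
    if "\<alpha> > 0" for \<alpha>
    using jack_f_eq_0_iff_at_any_pos[OF stanley la mu nu that zero_less_one] jack_f_one by simp
  have "2 / real m > 0"
    using m_pos by simp
  then show ?thesis
    using vanishing_iff_at_one zero_less_one by blast
qed

end
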